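(* Let $D$ be a locatable digraph of order $n$ with $\gamma_{OL}(D)=n$. Then $\mathcal{H}(D)$ is a disjoint union of rooted directed trees, such that for each root $r$ of one of these trees, $f^-(r)$ is domination-forced in $D$ (and thus $r$ has only one in-neighbour in $D$), and for each other vertex $v$, $f^-(v)$ is location-forced in $D$ (and $v$ has an in-neighbour in $\mathcal{H}(D)$).
   Context: Digraphs are finite and may contain loops; between two distinct vertices there may be arcs in one or both directions, no repeated arcs. $N^-(v)=\{u: uv\text{ is an arc}\}$ (contains $v$ iff $v$ has a loop). An OLD set of $D$ is a set $S\subseteq V(D)$ such that every vertex has an in-neighbour in $S$ and for every two distinct vertices $u,w$ some vertex of $S$ lies in exactly one of $N^-(u),N^-(w)$. $D$ is locatable if it has an OLD set, and then $\gamma_{OL}(D)$ is the minimum size of an OLD set. A vertex $v$ is domination-forced if some vertex $w$ has $N^-(w)=\{v\}$; it is location-forced if there are distinct vertices $x,y$ with $N^-(x)\ominus N^-(y)=\{v\}$ ($\ominus$ = symmetric difference). An arc $xy$ (possibly a loop) is forcing if $N^-(y)=\{x\}$ or there is a vertex $z$ with $N^-(z)=N^-(y)\setminus\{x\}$. In a locatable digraph $D$ of order $n$ with $\gamma_{OL}(D)=n$, every vertex $v$ is the head of exactly one forcing arc; $f^-(v)$ denotes its tail (so $f^-(v)=v$ if $v$ has a forcing loop). $\mathcal{H}(D)$ is the digraph on vertex set $V(D)$ with an arc from $x$ to $y$ if and only if there exists a location-forced vertex $v$ of $D$ with $N^-(x)=N^-(y)\setminus\{v\}$. A rooted directed tree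 is a digraph without loops and directed 2-cycles whose underlying undirected graph is a tree, with a single source (the root) and every arc oriented away from the root; a single vertex is allowed. *)

theory Defs
  imports Main
begin

text \<open>A digraph is given by a finite vertex set V and an arc set A \<subseteq> V \<times> V
  (loops allowed, (x,y) is the arc from x to y).\<close>

definition digraph :: "'a set \<Rightarrow> ('a \<times> 'a) set \<Rightarrow> bool" where
  "digraph V A \<longleftrightarrow> finite V \<and> A \<subseteq> V \<times> V"

definition inN :: "'a set \<Rightarrow> ('a \<times> 'a) set \<Rightarrow> 'a \<Rightarrow> 'a set" where
  "inN V A v = {u \<in> V. (u, v) \<in> A}"

definition symdiff :: "'a set \<Rightarrow> 'a set \<Rightarrow> 'a set" where
  "symdiff X Y = (X - Y) \<union> (Y - X)"

definition is_OLD :: "'a set \<Rightarrow> ('a \<times> 'a) set \<Rightarrow> 'a set \<Rightarrow> bool" where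
  "is_OLD V A S \<longleftrightarrow> S \<subseteq> V
     \<and> (\<forall>v\<in>V. inN V A v \<inter> S \<noteq> {})
     \<and> (\<forall>u\<in>V. \<forall>w\<in>V. u \<noteq> w \<longrightarrow> symdiff (inN V A u) (inN V A w) \<inter> S \<noteq> {})"

definition locatable :: "'a set \<Rightarrow> ('a \<times> 'a) set \<Rightarrow> bool" where
  "locatable V A \<longleftrightarrow> (\<exists>S. is_OLD V A S)"

definition gamma_OL :: "'a set \<Rightarrow> ('a \<times> 'a) set \<Rightarrow> nat" where
  "gamma_OL V A = (LEAST k. \<exists>S. is_OLD V A S \<and> card S = k)"

definition dom_forced :: "'a set \<Rightarrow> ('a \<times> 'a) set \<Rightarrow> 'a \<Rightarrow> bool" where
  "dom_forced V A v \<longleftrightarrow> v \<in> V \<and> (\<exists>w\<in>V. inN V A w = {v})"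

definition loc_forced :: "'a set \<Rightarrow> ('a \<times> 'a) set \<Rightarrow> 'a \<Rightarrow> bool" where
  "loc_forced V A v \<longleftrightarrow> v \<in> V \<and>
     (\<exists>x\<in>V. \<exists>y\<in>V. x \<noteq> y \<and> symdiff (inN V A x) (inN V A y) = {v})"

definition forcing_arc :: "'a set \<Rightarrow> ('a \<times> 'a) set \<Rightarrow> 'a \<Rightarrow> 'a \<Rightarrow> bool" where
  "forcing_arc V A x y \<longleftrightarrow> (x, y) \<in> A \<and>
     (inN V A y = {x} \<or> (\<exists>z\<in>V. inN V A z = inN V A y - {x}))"

text \<open>Tail of the (unique, when gamma_OL = n) forcing arc with head v.\<close>
definition fminus :: "'a set \<Rightarrow> ('a \<times> 'a) set \<Rightarrow> 'a \<Rightarrow> 'a" where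
  "fminus V A v = (THE x. forcing_arc V A x v)"

definition H_arcs :: "'a set \<Rightarrow> ('a \<times> 'a) set \<Rightarrow> ('a \<times> 'a) set" where
  "H_arcs V A = {(x, y). x \<in> V \<and> y \<in> V \<and>
     (\<exists>v. loc_forced V A v \<and> v \<in> inN V A y \<and> inN V A x = inN V A y - {v})}"

definition rooted_dtree :: "'a set \<Rightarrow> ('a \<times> 'a) set \<Rightarrow> 'a \<Rightarrow> bool" where
  "rooted_dtree W E r \<longleftrightarrow> finite W \<and> E \<subseteq> W \<times> W \<and> r \<in> W
     \<and> (\<forall>x. (x, x) \<notin> E)
     \<and> (\<forall>x y. (x, y) \<in> E \<longrightarrow> (y, x) \<notin> E)
     \<and> (\<forall>x\<in>W. \<forall>y\<in>W. (x, y) \<in> (E \<union> E\<inverse>)\<^sup>*)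
     \<and> card E = card W - 1
     \<and> {v \<in> W. \<not> (\<exists>u. (u, v) \<in> E)} = {r}
     \<and> (\<forall>v\<in>W. (r, v) \<in> E\<^sup>*)"

end

theory Submission
  imports Defs
begin

(* If gamma_OL(D) = n, then for every vertex x the set V - {x} is not an OLD set, so some
   in-neighbourhood equals {x} or two in-neighbourhoods differ exactly in x. In other words x
   labels an edge (S, S + x) of the family F of the n in-neighbourhoods together with the empty
   set. A family of m sets has fewer than m edge labels (delete one label and induct), so F,
   with n + 1 members and n labels, is tight: every label occurs on exactly one edge, every
   member of F is built up from the empty set along edges, and hence every nonempty member T
   has exactly one x with T - {x} in F. For T = N^-(y) this x is f^-(y), and H(D) joins the
   vertex with in-neighbourhood N^-(y) - {f^-(y)} to y. Thus every vertex has at most one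
   in-neighbour in H(D), |N^-| increases along its arcs, and H(D) is a forest of out-trees
   whose roots are the vertices with N^-(y) = {f^-(y)}. *)

section \<open>Edge labels of set families\<close>

definition edge_bottoms :: "'a set set \<Rightarrow> 'a \<Rightarrow> 'a set set" where
  "edge_bottoms K x = {S \<in> K. x \<notin> S \<and> insert x S \<in> K}"

definition edge_labels :: "'a set set \<Rightarrow> 'a set" where
  "edge_labels K = {x. edge_bottoms K x \<noteq> {}}"

lemma edge_labels_subset: "K \<subseteq> Pow V \<Longrightarrow> edge_labels K \<subseteq> V"
  unfolding edge_labels_def edge_bottoms_def by auto

text \<open>Deleting x from every member merges exactly the two ends of each edge labelled x.\<close>

lemma card_remove_image:
  assumes "finite K"
  shows "card K = card ((\<lambda>S. S - {x}) ` K) + card (edge_bottoms K x)"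
proof -
  define K0 where "K0 = {S \<in> K. x \<notin> S}"
  define K1 where "K1 = {S \<in> K. x \<in> S}"
  have fin: "finite K0" "finite K1" using assms unfolding K0_def K1_def by auto
  have "K = K0 \<union> K1" "K0 \<inter> K1 = {}" unfolding K0_def K1_def by auto
  then have "card K = card K0 + card K1" using fin by (simp add: card_Un_disjoint)
  moreover have "inj_on (\<lambda>S. S - {x}) K1"
    unfolding K1_def inj_on_def by (metis insert_Diff mem_Collect_eq)
  moreover have "(\<lambda>S. S - {x}) ` K = K0 \<union> (\<lambda>S. S - {x}) ` K1"
  proof (intro equalityI subsetI)
    fix T assume "T \<in> (\<lambda>S. S - {x}) ` K"
    then obtain S where "S \<in> K" "T = S - {x}" by blast
    then show "T \<in> K0 \<union> (\<lambda>S. S - {x}) ` K1"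
      unfolding K0_def K1_def by (cases "x \<in> S") auto
  qed (auto simp: K0_def K1_def)
  moreover have "K0 \<inter> (\<lambda>S. S - {x}) ` K1 = edge_bottoms K x"
  proof (intro equalityI subsetI)
    fix T assume "T \<in> K0 \<inter> (\<lambda>S. S - {x}) ` K1"
    then obtain S where "T \<in> K0" "S \<in> K1" "T = S - {x}" by blast
    then have "T \<in> K" "x \<notin> T" "insert x T = S" "S \<in> K" unfolding K0_def K1_def by auto
    then show "T \<in> edge_bottoms K x" unfolding edge_bottoms_def by auto
  next
    fix T assume "T \<in> edge_bottoms K x"
    then have "T \<in> K0" "insert x T \<in> K1" "T = insert x T - {x}"
      unfolding K0_def K1_def edge_bottoms_def by auto
    then show "T \<in> K0 \<inter> (\<lambda>S. S - {x}) ` K1" by blast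
  qed
  ultimately show ?thesis
    using card_Un_Int[of K0 "(\<lambda>S. S - {x}) ` K1"] fin by (simp add: card_image)
qed

lemma edge_labels_remove_image:
  "edge_labels K - {x} \<subseteq> edge_labels ((\<lambda>S. S - {x}) ` K)"
proof
  fix y assume "y \<in> edge_labels K - {x}"
  then obtain S where "S \<in> K" "y \<notin> S" "insert y S \<in> K" "y \<noteq> x"
    unfolding edge_labels_def edge_bottoms_def by auto
  then have "S - {x} \<in> edge_bottoms ((\<lambda>S. S - {x}) ` K) y"
    unfolding edge_bottoms_def by (auto intro!: image_eqI[of _ _ "insert y S"])
  then show "y \<in> edge_labels ((\<lambda>S. S - {x}) ` K)" unfolding edge_labels_def by auto
qed

lemma card_edge_labels_le_remove_image:
  assumes "finite V" "K \<subseteq> Pow V" "x \<in> edge_labels K"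
  shows "card (edge_labels K) \<le> Suc (card (edge_labels ((\<lambda>S. S - {x}) ` K)))"
proof -
  have "(\<lambda>S. S - {x}) ` K \<subseteq> Pow V" using assms(2) by auto
  then have "finite (edge_labels ((\<lambda>S. S - {x}) ` K))"
    using assms(1) edge_labels_subset by (metis finite_subset)
  then have "card (edge_labels K - {x}) \<le> card (edge_labels ((\<lambda>S. S - {x}) ` K))"
    by (rule card_mono[OF _ edge_labels_remove_image])
  moreover have "finite (edge_labels K)"
    using assms(1,2) edge_labels_subset by (metis finite_subset)
  ultimately show ?thesis using assms(3) by (simp add: card_Diff_singleton)
qed

lemma card_edge_labels_less:
  assumes "finite V" "K \<subseteq> Pow V" "K \<noteq> {}"
  shows "card (edge_labels K) < card K"
  using assms(2,3)
proof (induction "card K" arbitrary: K rule: less_induct)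
  case less
  have "finite K" using less.prems assms(1) by (meson finite_Pow_iff finite_subset)
  show ?case
  proof (cases "edge_labels K = {}")
    case True
    then show ?thesis using \<open>finite K\<close> less.prems(2) by (simp add: card_gt_0_iff)
  next
    case False
    then obtain x where x: "x \<in> edge_labels K" by auto
    define K' where "K' = (\<lambda>S. S - {x}) ` K"
    have "edge_bottoms K x \<noteq> {}" "finite (edge_bottoms K x)"
      using x \<open>finite K\<close> unfolding edge_labels_def edge_bottoms_def by auto
    then have "card K' < card K"
      using card_remove_image[OF \<open>finite K\<close>, of x] unfolding K'_def by (simp add: card_gt_0_iff)
    moreover have "K' \<subseteq> Pow V" "K' \<noteq> {}" using less.prems unfolding K'_def by auto
    ultimately have "card (edge_labels K') < card K'" using less.hyps by blast
    then show ?thesis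
      using card_edge_labels_le_remove_image[OF assms(1) less.prems(1) x] \<open>card K' < card K\<close>
      unfolding K'_def by linarith
  qed
qed

lemma card_edge_labels_add_edge_bottoms:
  assumes "finite V" "K \<subseteq> Pow V" "x \<in> edge_labels K"
  shows "card (edge_labels K) + card (edge_bottoms K x) \<le> card K"
proof -
  define K' where "K' = (\<lambda>S. S - {x}) ` K"
  have "K' \<subseteq> Pow V" "K' \<noteq> {}"
    using assms(2,3) unfolding K'_def edge_labels_def edge_bottoms_def by auto
  then have "card (edge_labels K') < card K'" using card_edge_labels_less[OF assms(1)] by blast
  moreover have "finite K" using assms(1,2) by (meson finite_Pow_iff finite_subset)
  ultimately show ?thesis
    using card_remove_image[of K x] card_edge_labels_le_remove_image[OF assms]
    unfolding K'_def by linarith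
qed

inductive buildable :: "'a set set \<Rightarrow> 'a set \<Rightarrow> bool" for F where
  buildable_empty: "buildable F {}"
| buildable_insert: "buildable F S \<Longrightarrow> x \<notin> S \<Longrightarrow> insert x S \<in> F \<Longrightarrow> buildable F (insert x S)"

lemma buildable_mem: "buildable F S \<Longrightarrow> {} \<in> F \<Longrightarrow> S \<in> F"
  by (induction rule: buildable.induct) auto

lemma buildable_edge:
  "buildable F S \<Longrightarrow> x \<in> S \<Longrightarrow> \<exists>B. buildable F B \<and> x \<notin> B \<and> insert x B \<in> F"
  by (induction rule: buildable.induct) blast+

text \<open>The equality case of card_edge_labels_less.\<close>

locale tight_family =
  fixes V :: "'a set" and F :: "'a set set"
  assumes finite_V: "finite V"
    and family_subset: "F \<subseteq> Pow V"
    and empty_mem: "{} \<in> F"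
    and card_family: "card F = Suc (card V)"
    and subset_edge_labels: "V \<subseteq> edge_labels F"
begin

lemma finite_family: "finite F"
  using finite_V family_subset by (meson finite_Pow_iff finite_subset)

lemma edge_labels_eq: "edge_labels F = V"
  using edge_labels_subset[OF family_subset] subset_edge_labels by blast

lemma edge_bottoms_unique:
  assumes "S \<in> edge_bottoms F x" "S' \<in> edge_bottoms F x"
  shows "S = S'"
proof -
  have "x \<in> V" using assms(1) edge_labels_eq unfolding edge_labels_def by auto
  then have "card V + card (edge_bottoms F x) \<le> card F"
    using card_edge_labels_add_edge_bottoms[OF finite_V family_subset] edge_labels_eq by metis
  then have "card (edge_bottoms F x) \<le> 1" using card_family by simp
  moreover have "finite (edge_bottoms F x)" using finite_family unfolding edge_bottoms_def by simp
  ultimately show ?thesis using assms card_le_Suc0_iff_eq by (metis One_nat_def)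
qed

text \<open>Otherwise the buildable and the other members of F split the labels between them: by
  uniqueness of edges, either both ends of an edge are buildable or neither is. Then
  card_edge_labels_less, applied to both parts, leaves too few labels.\<close>

lemma buildable_if_mem:
  assumes "T \<in> F"
  shows "buildable F T"
proof (rule ccontr)
  assume "\<not> buildable F T"
  define K1 where "K1 = {S \<in> F. buildable F S}"
  define K2 where "K2 = {S \<in> F. \<not> buildable F S}"
  have "K1 \<subseteq> Pow V" "K2 \<subseteq> Pow V" unfolding K1_def K2_def using family_subset by auto
  moreover have "{} \<in> K1" "T \<in> K2"
    unfolding K1_def K2_def using empty_mem buildable_empty assms \<open>\<not> buildable F T\<close> by auto
  ultimately have less: "card (edge_labels K1) < card K1" "card (edge_labels K2) < card K2"
    using card_edge_labels_less[OF finite_V] by (metis empty_iff)+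
  have "F = K1 \<union> K2" "K1 \<inter> K2 = {}" unfolding K1_def K2_def by auto
  then have "card F = card K1 + card K2" using finite_family by (metis card_Un_disjoint finite_Un)
  have "V \<subseteq> edge_labels K1 \<union> edge_labels K2"
  proof
    fix x assume "x \<in> V"
    then obtain S where S: "S \<in> F" "x \<notin> S" "insert x S \<in> F"
      using subset_edge_labels unfolding edge_labels_def edge_bottoms_def by blast
    show "x \<in> edge_labels K1 \<union> edge_labels K2"
    proof (cases "buildable F S")
      case True
      then have "S \<in> edge_bottoms K1 x"
        using S buildable_insert[OF True] unfolding edge_bottoms_def K1_def by simp
      then show ?thesis unfolding edge_labels_def by auto
    next
      case False
      have "\<not> buildable F (insert x S)"
      proof
        assume "buildable F (insert x S)"
        from buildable_edge[OF this insertI1]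
        obtain B where B: "buildable F B" "x \<notin> B" "insert x B \<in> F" by blast
        then have "B \<in> edge_bottoms F x" "S \<in> edge_bottoms F x"
          using buildable_mem[OF B(1) empty_mem] S unfolding edge_bottoms_def by simp_all
        then show False using edge_bottoms_unique B(1) False by blast
      qed
      then have "S \<in> edge_bottoms K2 x" using S False unfolding edge_bottoms_def K2_def by simp
      then show ?thesis unfolding edge_labels_def by auto
    qed
  qed
  moreover have "finite (edge_labels K1)" "finite (edge_labels K2)"
    using edge_labels_subset \<open>K1 \<subseteq> Pow V\<close> \<open>K2 \<subseteq> Pow V\<close> finite_V by (metis finite_subset)+
  ultimately have "card V \<le> card (edge_labels K1 \<union> edge_labels K2)"
    by (intro card_mono) auto
  also have "\<dots> \<le> card (edge_labels K1) + card (edge_labels K2)"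
    by (rule card_Un_le)
  finally
  show False using less \<open>card F = card K1 + card K2\<close> card_family by linarith
qed

definition bottom :: "'a \<Rightarrow> 'a set" where
  "bottom x = (THE S. S \<in> edge_bottoms F x)"

lemma bottom_mem_edge_bottoms:
  assumes "x \<in> V"
  shows "bottom x \<in> edge_bottoms F x"
proof -
  obtain S where "S \<in> edge_bottoms F x"
    using assms subset_edge_labels unfolding edge_labels_def by blast
  then show ?thesis unfolding bottom_def using edge_bottoms_unique by (metis theI)
qed

lemma image_insert_bottom: "(\<lambda>x. insert x (bottom x)) ` V = F - {{}}"
proof
  show "(\<lambda>x. insert x (bottom x)) ` V \<subseteq> F - {{}}"
    using bottom_mem_edge_bottoms unfolding edge_bottoms_def by auto
next
  show "F - {{}} \<subseteq> (\<lambda>x. insert x (bottom x)) ` V"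
  proof
    fix T assume T: "T \<in> F - {{}}"
    then have "buildable F T" using buildable_if_mem by blast
    then obtain S x where "buildable F S" "x \<notin> S" "insert x S \<in> F" "T = insert x S"
      using T by (cases rule: buildable.cases) auto
    moreover have "x \<in> V" using calculation family_subset by auto
    moreover have "S \<in> edge_bottoms F x"
      using calculation buildable_mem[OF _ empty_mem] unfolding edge_bottoms_def by blast
    ultimately have "bottom x = S" using bottom_mem_edge_bottoms edge_bottoms_unique by blast
    then show "T \<in> (\<lambda>x. insert x (bottom x)) ` V" using \<open>x \<in> V\<close> \<open>T = insert x S\<close> by blast
  qed
qed

lemma inj_on_insert_bottom: "inj_on (\<lambda>x. insert x (bottom x)) V"
proof (rule eq_card_imp_inj_on[OF finite_V])
  show "card ((\<lambda>x. insert x (bottom x)) ` V) = card V"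
    using image_insert_bottom card_family finite_family empty_mem by simp
qed

lemma ex1_remove_mem:
  assumes "T \<in> F" "T \<noteq> {}"
  shows "\<exists>!x. x \<in> T \<and> T - {x} \<in> F"
proof -
  have top_eq: "insert x (bottom x) = T" if "x \<in> T" "T - {x} \<in> F" for x
  proof -
    have "x \<in> V" using that assms(1) family_subset by auto
    moreover have "T - {x} \<in> edge_bottoms F x"
      using that assms(1) unfolding edge_bottoms_def by (simp add: insert_absorb)
    ultimately have "bottom x = T - {x}" using bottom_mem_edge_bottoms edge_bottoms_unique by blast
    then show ?thesis using that(1) by auto
  qed
  have "T \<in> (\<lambda>x. insert x (bottom x)) ` V" using image_insert_bottom assms by simp
  then obtain x where "x \<in> V" "insert x (bottom x) = T" by (elim imageE) simp
  then have "x \<in> T \<and> T - {x} \<in> F"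
    using bottom_mem_edge_bottoms unfolding edge_bottoms_def by auto
  moreover have "y = x" if "y \<in> T \<and> T - {y} \<in> F" for y
  proof -
    have "y \<in> V" using that assms(1) family_subset by auto
    moreover have "insert y (bottom y) = insert x (bottom x)"
      using top_eq that \<open>insert x (bottom x) = T\<close> by simp
    ultimately show ?thesis using inj_on_insert_bottom \<open>x \<in> V\<close> by (meson inj_onD)
  qed
  ultimately show ?thesis by blast
qed

end

section \<open>Forests of rooted directed trees\<close>

locale forest_digraph =
  fixes V :: "'a set" and E :: "('a \<times> 'a) set"
  assumes finite_V: "finite V"
    and arcs_subset: "E \<subseteq> V \<times> V"
    and acyclic_arcs: "acyclic E"
    and in_arc_unique: "(u, v) \<in> E \<Longrightarrow> (u', v) \<in> E \<Longrightarrow> u = u'"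
begin

definition is_source :: "'a \<Rightarrow> bool" where
  "is_source r \<longleftrightarrow> r \<in> V \<and> (\<forall>u. (u, r) \<notin> E)"

definition subtree :: "'a \<Rightarrow> 'a set" where
  "subtree r = {v. (r, v) \<in> E\<^sup>*}"

lemma source_reaches:
  assumes "v \<in> V"
  shows "\<exists>r. is_source r \<and> (r, v) \<in> E\<^sup>*"
proof -
  have "finite E" using finite_V arcs_subset finite_subset by blast
  then have "wf E" using acyclic_arcs by (rule finite_acyclic_wf)
  then show ?thesis
    using assms
  proof (induction v rule: wf_induct_rule)
    case (less v)
    show ?case
    proof (cases "is_source v")
      case False
      then obtain u where "(u, v) \<in> E" using less.prems unfolding is_source_def by blast
      moreover then have "u \<in> V" using arcs_subset by blast
      ultimately show ?thesis using less.IH by (meson rtrancl.rtrancl_into_rtrancl)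
    qed blast
  qed
qed

lemma rtrancl_into_source: "(x, r) \<in> E\<^sup>* \<Longrightarrow> is_source r \<Longrightarrow> x = r"
  unfolding is_source_def by (auto elim: rtranclE)

lemma rtrancl_ancestors_comparable:
  assumes "(a, v) \<in> E\<^sup>*" "(b, v) \<in> E\<^sup>*"
  shows "(a, b) \<in> E\<^sup>* \<or> (b, a) \<in> E\<^sup>*"
  using assms
proof (induction rule: rtrancl_induct)
  case (step y z)
  from \<open>(b, z) \<in> E\<^sup>*\<close> show ?case
  proof (cases rule: rtranclE)
    case (step y')
    then have "y' = y" using in_arc_unique \<open>(y, z) \<in> E\<close> by blast
    then show ?thesis using step.IH \<open>(b, y') \<in> E\<^sup>*\<close> by blast
  qed (use step.hyps in auto)
qed simp

lemma source_unique:
  assumes "is_source r" "is_source r'" "(r, v) \<in> E\<^sup>*" "(r', v) \<in> E\<^sup>*"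
  shows "r = r'"
  using rtrancl_ancestors_comparable[OF assms(3,4)] rtrancl_into_source assms(1,2) by metis

lemma subtree_subset: "r \<in> V \<Longrightarrow> subtree r \<subseteq> V"
  unfolding subtree_def using arcs_subset by (auto elim: rtranclE)

lemma root_mem_subtree: "r \<in> subtree r"
  unfolding subtree_def by simp

lemma in_arc_in_subtree:
  assumes "v \<in> subtree r" "v \<noteq> r"
  shows "\<exists>u \<in> subtree r. (u, v) \<in> E"
  using assms unfolding subtree_def by (auto elim: rtranclE)

lemma rtrancl_within_subtree:
  assumes "v \<in> subtree r"
  shows "(r, v) \<in> (E \<inter> subtree r \<times> subtree r)\<^sup>*"
proof -
  have "(r, v) \<in> E\<^sup>*" using assms unfolding subtree_def by simp
  then show ?thesis
  proof (induction rule: rtrancl_induct)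
    case (step y z)
    then have "(y, z) \<in> E \<inter> subtree r \<times> subtree r"
      unfolding subtree_def by (auto intro: rtrancl_into_rtrancl)
    with step.IH show ?case by (rule rtrancl_into_rtrancl)
  qed simp
qed

lemma card_arcs_subtree:
  assumes "is_source r"
  shows "card (E \<inter> subtree r \<times> subtree r) = card (subtree r) - 1"
proof -
  have "snd ` (E \<inter> subtree r \<times> subtree r) = subtree r - {r}"
  proof (intro equalityI subsetI)
    fix v assume "v \<in> snd ` (E \<inter> subtree r \<times> subtree r)"
    then show "v \<in> subtree r - {r}" using assms unfolding is_source_def by force
  next
    fix v assume "v \<in> subtree r - {r}"
    then obtain u where "u \<in> subtree r" "(u, v) \<in> E" using in_arc_in_subtree by blast
    then show "v \<in> snd ` (E \<inter> subtree r \<times> subtree r)"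
      using \<open>v \<in> subtree r - {r}\<close> by force
  qed
  moreover have "inj_on snd (E \<inter> subtree r \<times> subtree r)"
    using in_arc_unique by (intro inj_onI) auto
  moreover have "finite (subtree r)"
    using subtree_subset assms finite_V finite_subset unfolding is_source_def by blast
  ultimately show ?thesis using root_mem_subtree by (metis card_Diff_singleton card_image)
qed

lemma rooted_dtree_subtree:
  assumes "is_source r"
  shows "rooted_dtree (subtree r) (E \<inter> subtree r \<times> subtree r) r"
proof -
  let ?W = "subtree r" and ?E = "E \<inter> subtree r \<times> subtree r"
  have no_loop: "(x, x) \<notin> E" for x using acyclic_arcs unfolding acyclic_def by blast
  have no_2cycle: "(y, x) \<notin> E" if "(x, y) \<in> E" for x y
    using that acyclic_arcs unfolding acyclic_def by (meson trancl.simps trancl_into_trancl)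
  have reach: "\<forall>v \<in> ?W. (r, v) \<in> ?E\<^sup>*" using rtrancl_within_subtree by blast
  have "(x, y) \<in> (?E \<union> ?E\<inverse>)\<^sup>*" if "x \<in> ?W" "y \<in> ?W" for x y
  proof -
    have "(x, r) \<in> (?E \<union> ?E\<inverse>)\<^sup>*"
      using reach that(1) by (meson in_rtrancl_UnI rtrancl_converseI)
    moreover have "(r, y) \<in> (?E \<union> ?E\<inverse>)\<^sup>*" using reach that(2) by (meson in_rtrancl_UnI)
    ultimately show ?thesis by (rule rtrancl_trans)
  qed
  moreover have "{v \<in> ?W. \<not> (\<exists>u. (u, v) \<in> ?E)} = {r}"
    using in_arc_in_subtree assms root_mem_subtree unfolding is_source_def by blast
  moreover have "finite ?W"
    using subtree_subset assms finite_V finite_subset unfolding is_source_def by blast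
  ultimately show ?thesis
    unfolding rooted_dtree_def
    using root_mem_subtree no_loop no_2cycle reach card_arcs_subtree[OF assms] by blast
qed

lemma inj_on_subtree: "inj_on subtree (Collect is_source)"
  using root_mem_subtree rtrancl_into_source unfolding subtree_def by (intro inj_onI) blast

theorem rooted_dtree_partition:
  "\<exists>P root. (\<forall>W\<in>P. W \<noteq> {} \<and> W \<subseteq> V)
     \<and> (\<forall>v\<in>V. \<exists>!W. W \<in> P \<and> v \<in> W)
     \<and> E \<subseteq> (\<Union>W\<in>P. W \<times> W)
     \<and> (\<forall>W\<in>P. rooted_dtree W (E \<inter> W \<times> W) (root W)
           \<and> (\<forall>v\<in>W. (\<exists>u. (u, v) \<in> E) \<longleftrightarrow> v \<noteq> root W))"
proof -
  define P where "P = subtree ` Collect is_source"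
  define root where "root = inv_into (Collect is_source) subtree"
  have "W \<noteq> {} \<and> W \<subseteq> V" if "W \<in> P" for W
    using that root_mem_subtree subtree_subset unfolding P_def is_source_def by blast
  moreover have "\<exists>!W. W \<in> P \<and> v \<in> W" if "v \<in> V" for v
    using source_reaches[OF that] source_unique unfolding P_def subtree_def by blast
  moreover have "E \<subseteq> (\<Union>W\<in>P. W \<times> W)"
  proof
    fix e assume "e \<in> E"
    then obtain a b where "e = (a, b)" "(a, b) \<in> E" "a \<in> V" using arcs_subset by blast
    moreover obtain r where "is_source r" "(r, a) \<in> E\<^sup>*" using source_reaches calculation by blast
    ultimately show "e \<in> (\<Union>W\<in>P. W \<times> W)"
      unfolding P_def subtree_def by (blast intro: rtrancl_into_rtrancl)
  qed
  moreover have "rooted_dtree W (E \<inter> W \<times> W) (root W)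
      \<and> (\<forall>v\<in>W. (\<exists>u. (u, v) \<in> E) \<longleftrightarrow> v \<noteq> root W)" if "W \<in> P" for W
  proof -
    obtain r where r: "is_source r" "W = subtree r" using \<open>W \<in> P\<close> unfolding P_def by blast
    then have "root W = r" using inv_into_f_f[OF inj_on_subtree] unfolding root_def by simp
    moreover have "(\<exists>u. (u, v) \<in> E) \<longleftrightarrow> v \<noteq> r" if "v \<in> W" for v
      using in_arc_in_subtree[of v r] that r unfolding is_source_def by blast
    ultimately show ?thesis using rooted_dtree_subtree[OF r(1)] r(2) by simp
  qed
  ultimately show ?thesis by (intro exI[of _ P] exI[of _ root]) simp
qed

end

section \<open>Digraphs with gamma_OL equal to the order\<close>

lemma inN_subset: "inN V A v \<subseteq> V"
  unfolding inN_def by auto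

lemma is_OLD_inN_nonempty: "is_OLD V A S \<Longrightarrow> v \<in> V \<Longrightarrow> inN V A v \<noteq> {}"
  unfolding is_OLD_def by blast

lemma is_OLD_inj_on_inN:
  assumes "is_OLD V A S"
  shows "inj_on (inN V A) V"
proof (rule inj_onI, rule ccontr)
  fix u w assume "u \<in> V" "w \<in> V" "inN V A u = inN V A w" "u \<noteq> w"
  have "symdiff (inN V A u) (inN V A w) \<inter> S \<noteq> {}"
    using assms \<open>u \<in> V\<close> \<open>w \<in> V\<close> \<open>u \<noteq> w\<close> unfolding is_OLD_def by blast
  then show False using \<open>inN V A u = inN V A w\<close> unfolding symdiff_def by simp
qed

lemma symdiff_eq_singleton:
  assumes "symdiff X Y = {x}"
  shows "(x \<notin> X \<and> Y = insert x X) \<or> (x \<notin> Y \<and> X = insert x Y)"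
proof -
  have "X - Y \<subseteq> {x}" "Y - X \<subseteq> {x}" "x \<in> X - Y \<or> x \<in> Y - X"
    using assms unfolding symdiff_def by blast+
  then show ?thesis by blast
qed

lemma edge_label_if_remove_not_OLD:
  assumes nonempty: "\<And>v. v \<in> V \<Longrightarrow> inN V A v \<noteq> {}" and inj: "inj_on (inN V A) V"
    and not_OLD: "\<not> is_OLD V A (V - {x})"
  shows "x \<in> edge_labels (insert {} (inN V A ` V))"
proof -
  consider v where "v \<in> V" "inN V A v \<inter> (V - {x}) = {}"
    | u w where "u \<in> V" "w \<in> V" "u \<noteq> w" "symdiff (inN V A u) (inN V A w) \<inter> (V - {x}) = {}"
    using not_OLD unfolding is_OLD_def by auto
  then show ?thesis
  proof cases
    case (1 v)
    then have "inN V A v = insert x {}"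
      using nonempty[OF \<open>v \<in> V\<close>] inN_subset[of V A v] by blast
    then have "{} \<in> edge_bottoms (insert {} (inN V A ` V)) x"
      using \<open>v \<in> V\<close> unfolding edge_bottoms_def by auto
    then show ?thesis unfolding edge_labels_def by blast
  next
    case (2 u w)
    have "inN V A u \<noteq> inN V A w" using inj 2(1-3) unfolding inj_on_def by blast
    then have "symdiff (inN V A u) (inN V A w) \<noteq> {}" unfolding symdiff_def by blast
    moreover have "symdiff (inN V A u) (inN V A w) \<subseteq> {x}"
      using 2(4) inN_subset[of V A u] inN_subset[of V A w] unfolding symdiff_def by blast
    ultimately have "symdiff (inN V A u) (inN V A w) = {x}" by blast
    then consider "x \<notin> inN V A u" "insert x (inN V A u) = inN V A w"
      | "x \<notin> inN V A w" "insert x (inN V A w) = inN V A u"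
      using symdiff_eq_singleton by metis
    then have "inN V A u \<in> edge_bottoms (insert {} (inN V A ` V)) x
        \<or> inN V A w \<in> edge_bottoms (insert {} (inN V A ` V)) x"
      using 2(1,2) unfolding edge_bottoms_def by cases auto
    then show ?thesis unfolding edge_labels_def by blast
  qed
qed

locale OL_extremal_digraph =
  fixes V :: "'a set" and A :: "('a \<times> 'a) set"
  assumes digraph: "digraph V A"
    and locatable: "locatable V A"
    and gamma_OL_eq_card: "gamma_OL V A = card V"
begin

abbreviation N :: "'a \<Rightarrow> 'a set" where
  "N \<equiv> inN V A"

definition nbhd_family :: "'a set set" where
  "nbhd_family = insert {} (N ` V)"

lemma finite_V: "finite V"
  using digraph unfolding digraph_def by simp

lemma OLD_set_exists: obtains S where "is_OLD V A S"
  using locatable unfolding locatable_def by blast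

lemma inN_nonempty: "v \<in> V \<Longrightarrow> N v \<noteq> {}"
  by (metis OLD_set_exists is_OLD_inN_nonempty)

lemma inj_on_inN: "inj_on N V"
  by (metis OLD_set_exists is_OLD_inj_on_inN)

lemma remove_not_OLD:
  assumes "x \<in> V"
  shows "\<not> is_OLD V A (V - {x})"
proof
  assume "is_OLD V A (V - {x})"
  then have "gamma_OL V A \<le> card (V - {x})" unfolding gamma_OL_def by (intro Least_le) blast
  moreover have "card (V - {x}) < card V" using finite_V assms by (rule card_Diff1_less)
  ultimately show False using gamma_OL_eq_card by simp
qed

sublocale tight_family V nbhd_family
proof
  show "finite V" by (rule finite_V)
  show "nbhd_family \<subseteq> Pow V" unfolding nbhd_family_def using inN_subset[of V A] by auto
  show "{} \<in> nbhd_family" unfolding nbhd_family_def by simp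
  have "{} \<notin> N ` V" using inN_nonempty by auto
  then show "card nbhd_family = Suc (card V)"
    unfolding nbhd_family_def using finite_V card_image[OF inj_on_inN] by simp
  show "V \<subseteq> edge_labels nbhd_family"
    using edge_label_if_remove_not_OLD[OF inN_nonempty inj_on_inN remove_not_OLD]
    unfolding nbhd_family_def by blast
qed

lemma forcing_arc_iff:
  assumes "y \<in> V"
  shows "forcing_arc V A x y \<longleftrightarrow> x \<in> N y \<and> N y - {x} \<in> nbhd_family"
proof -
  have "(x, y) \<in> A \<longleftrightarrow> x \<in> N y" using digraph assms unfolding digraph_def inN_def by auto
  moreover have "N y = {x} \<longleftrightarrow> N y - {x} = {}" if "x \<in> N y" using that by auto
  ultimately show ?thesis unfolding forcing_arc_def nbhd_family_def by (auto simp: eq_commute)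
qed

lemma ex1_forcing_arc: "y \<in> V \<Longrightarrow> \<exists>!x. forcing_arc V A x y"
  using ex1_remove_mem[of "N y"] inN_nonempty forcing_arc_iff
  unfolding nbhd_family_def by simp

lemma fminus_mem_inN: "y \<in> V \<Longrightarrow> fminus V A y \<in> N y"
  and inN_remove_fminus_mem: "y \<in> V \<Longrightarrow> N y - {fminus V A y} \<in> nbhd_family"
  using theI'[OF ex1_forcing_arc] forcing_arc_iff unfolding fminus_def by blast+

lemma fminus_unique: "y \<in> V \<Longrightarrow> x \<in> N y \<Longrightarrow> N y - {x} \<in> nbhd_family \<Longrightarrow> x = fminus V A y"
  using ex1_forcing_arc forcing_arc_iff fminus_mem_inN inN_remove_fminus_mem by blast

lemma H_arcs_iff: "(a, b) \<in> H_arcs V A \<longleftrightarrow> a \<in> V \<and> b \<in> V \<and> N a = N b - {fminus V A b}"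
proof
  assume "(a, b) \<in> H_arcs V A"
  then obtain v where "a \<in> V" "b \<in> V" "v \<in> N b" "N a = N b - {v}"
    unfolding H_arcs_def by blast
  moreover have "N b - {v} \<in> nbhd_family"
    using \<open>a \<in> V\<close> \<open>N a = N b - {v}\<close> unfolding nbhd_family_def by auto
  ultimately have "v = fminus V A b" using fminus_unique by blast
  with \<open>a \<in> V\<close> \<open>b \<in> V\<close> \<open>N a = N b - {v}\<close>
  show "a \<in> V \<and> b \<in> V \<and> N a = N b - {fminus V A b}" by simp
next
  assume ab: "a \<in> V \<and> b \<in> V \<and> N a = N b - {fminus V A b}"
  then have "fminus V A b \<in> N b" using fminus_mem_inN by blast
  then have "a \<noteq> b" "symdiff (N a) (N b) = {fminus V A b}"
    using ab unfolding symdiff_def by auto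
  then have "loc_forced V A (fminus V A b)"
    using ab \<open>fminus V A b \<in> N b\<close> inN_subset[of V A b] unfolding loc_forced_def by blast
  then show "(a, b) \<in> H_arcs V A" unfolding H_arcs_def using ab \<open>fminus V A b \<in> N b\<close> by blast
qed

lemma card_inN_less_if_H_arc: "(a, b) \<in> H_arcs V A \<Longrightarrow> card (N a) < card (N b)"
  using H_arcs_iff fminus_mem_inN finite_V inN_subset
  by (metis card_Diff1_less finite_subset)

sublocale H: forest_digraph V "H_arcs V A"
proof
  show "finite V" by (rule finite_V)
  show "H_arcs V A \<subseteq> V \<times> V" unfolding H_arcs_def by blast
  have "H_arcs V A \<subseteq> measure (\<lambda>v. card (N v))" using card_inN_less_if_H_arc by auto
  then show "acyclic (H_arcs V A)" by (meson wf_acyclic wf_measure wf_subset)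
  show "u = u'" if "(u, v) \<in> H_arcs V A" "(u', v) \<in> H_arcs V A" for u u' v
    using that H_arcs_iff inj_on_inN unfolding inj_on_def by metis
qed

lemma loc_forced_fminus_if_H_arc:
  assumes "(u, v) \<in> H_arcs V A"
  shows "loc_forced V A (fminus V A v)"
proof -
  obtain w where "loc_forced V A w" "w \<in> N v" "N u = N v - {w}" "u \<in> V" "v \<in> V"
    using assms unfolding H_arcs_def by blast
  moreover have "N v - {w} \<in> nbhd_family"
    using \<open>u \<in> V\<close> \<open>N u = N v - {w}\<close> unfolding nbhd_family_def by auto
  ultimately show ?thesis using fminus_unique by metis
qed

lemma dom_forced_fminus_if_no_H_arc:
  assumes "y \<in> V" "\<forall>u. (u, y) \<notin> H_arcs V A"
  shows "dom_forced V A (fminus V A y)" "card (N y) = 1"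
proof -
  have "N y - {fminus V A y} \<notin> N ` V" using assms H_arcs_iff by blast
  then have "N y - {fminus V A y} = {}"
    using inN_remove_fminus_mem[OF assms(1)] unfolding nbhd_family_def by simp
  then have "N y = {fminus V A y}" using fminus_mem_inN[OF assms(1)] by blast
  then show "dom_forced V A (fminus V A y)" "card (N y) = 1"
    using assms(1) inN_subset[of V A y] unfolding dom_forced_def by auto
qed

end

theorem theorem17:
  fixes V :: "'a set" and A :: "('a \<times> 'a) set" and n :: nat
  assumes "digraph V A"
    and "card V = n"
    and "locatable V A"
    and "gamma_OL V A = n"
  shows "\<exists>P root.
           (\<forall>W\<in>P. W \<noteq> {} \<and> W \<subseteq> V)
         \<and> (\<forall>v\<in>V. \<exists>!W. W \<in> P \<and> v \<in> W)
         \<and> H_arcs V A \<subseteq> (\<Union>W\<in>P. W \<times> W)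
         \<and> (\<forall>W\<in>P. rooted_dtree W (H_arcs V A \<inter> (W \<times> W)) (root W)
               \<and> dom_forced V A (fminus V A (root W))
               \<and> card (inN V A (root W)) = 1
               \<and> (\<forall>v\<in>W. v \<noteq> root W \<longrightarrow>
                     loc_forced V A (fminus V A v) \<and> (\<exists>u. (u, v) \<in> H_arcs V A)))"
proof -
  interpret OL_extremal_digraph V A
    using assms by unfold_locales simp_all
  obtain P root where P: "\<forall>W\<in>P. W \<noteq> {} \<and> W \<subseteq> V" "\<forall>v\<in>V. \<exists>!W. W \<in> P \<and> v \<in> W"
      "H_arcs V A \<subseteq> (\<Union>W\<in>P. W \<times> W)"
    and trees: "\<forall>W\<in>P. rooted_dtree W (H_arcs V A \<inter> W \<times> W) (root W)
           \<and> (\<forall>v\<in>W. (\<exists>u. (u, v) \<in> H_arcs V A) \<longleftrightarrow> v \<noteq> root W)"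
    using H.rooted_dtree_partition by (elim exE conjE) (rule that)
  have "root W \<in> V" "\<forall>u. (u, root W) \<notin> H_arcs V A" if "W \<in> P" for W
  proof -
    have "root W \<in> W" using trees that unfolding rooted_dtree_def by blast
    then show "root W \<in> V" "\<forall>u. (u, root W) \<notin> H_arcs V A" using P(1) trees that by blast+
  qed
  with P trees show ?thesis
    by (intro exI[of _ P] exI[of _ root])
      (simp add: dom_forced_fminus_if_no_H_arc, metis loc_forced_fminus_if_H_arc)
qed

end
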